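(* Let $(E,\mathcal{L},g)$ be a uniform affine oriented matroid with $|E|>1$ such that every maximal element of its bounded complex $\mathcal{L}^{++}$ is a tope of $\mathcal{L}$, and such that $X\backslash g\neq 0$ for every $X\in\mathcal{L}^+$. Then for $X\in\mathcal{L}^+$: $X\backslash g\in\mathcal{L}/g$ if and only if $X\notin\mathcal{L}^{++}$.
   Context: An oriented matroid $(E,\mathcal{L})$ is given by covectors $\mathcal{L}\subseteq\{+,-,0\}^E$ satisfying the standard covector axioms, ordered componentwise by $0<+$, $0<-$; topes are maximal covectors. Uniform: the underlying matroid (flats $z(X)=\{e:X_e=0\}$, $X\in\mathcal{L}$) of rank $r$ has every $r$-subset of $E$ as a basis. An affine oriented matroid $(E,\mathcal{L},g)$ has a distinguished non-loop $g\in E$; $\mathcal{L}^+=\{X\in\mathcal{L}:X_g=+\}$; bounded complex $\mathcal{L}^{++}=\{X\in\mathcal{L}^+:\ \text{all } 0\neq Y\le X \text{ in } \mathcal{L} \text{ have } Y_g=+\}$. For a sign vector $X\in\{+,-,0\}^E$, $X\backslash g$ denotes its restriction to $E\setminus\{g\}$. The contraction is $\mathcal{L}/g=\{Y\backslash g: Y\in\mathcal{L},\ Y_g=0\}$, an oriented matroid on $E\setminus\{g\}$. *)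

theory Defs
  imports Main
begin

datatype sign = Pos | Neg | Zero

text \<open>Sign vectors on a ground set E are functions into sign that vanish outside E.\<close>
type_synonym 'e svec = "'e \<Rightarrow> sign"

definition zero_sv :: "'e svec" where "zero_sv = (\<lambda>_. Zero)"

fun neg_sign :: "sign \<Rightarrow> sign" where
  "neg_sign Pos = Neg" | "neg_sign Neg = Pos" | "neg_sign Zero = Zero"

definition neg_sv :: "'e svec \<Rightarrow> 'e svec" where
  "neg_sv X = (\<lambda>e. neg_sign (X e))"

definition comp_sv :: "'e svec \<Rightarrow> 'e svec \<Rightarrow> 'e svec" where
  "comp_sv X Y = (\<lambda>e. if X e \<noteq> Zero then X e else Y e)"

definition sep_set :: "'e svec \<Rightarrow> 'e svec \<Rightarrow> 'e set" where
  "sep_set X Y = {f. X f \<noteq> Zero \<and> Y f = neg_sign (X f)}"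

definition le_sv :: "'e svec \<Rightarrow> 'e svec \<Rightarrow> bool" where
  "le_sv X Y \<longleftrightarrow> (\<forall>e. X e = Zero \<or> X e = Y e)"

definition zset :: "'e svec \<Rightarrow> 'e set" where
  "zset X = {e. X e = Zero}"

definition oriented_matroid :: "'e set \<Rightarrow> 'e svec set \<Rightarrow> bool" where
  "oriented_matroid E L \<longleftrightarrow>
     finite E \<and>
     (\<forall>X\<in>L. \<forall>e. e \<notin> E \<longrightarrow> X e = Zero) \<and>
     zero_sv \<in> L \<and>
     (\<forall>X\<in>L. neg_sv X \<in> L) \<and>
     (\<forall>X\<in>L. \<forall>Y\<in>L. comp_sv X Y \<in> L) \<and>
     (\<forall>X\<in>L. \<forall>Y\<in>L. \<forall>e\<in>sep_set X Y. \<exists>Z\<in>L. Z e = Zero \<and>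
         (\<forall>f. f \<notin> sep_set X Y \<longrightarrow> Z f = comp_sv X Y f))"

definition tope :: "'e svec set \<Rightarrow> 'e svec \<Rightarrow> bool" where
  "tope L T \<longleftrightarrow> T \<in> L \<and> (\<forall>Y\<in>L. le_sv T Y \<longrightarrow> Y = T)"

text \<open>Underlying matroid given by its flats z(X), X in L.\<close>
definition om_closure :: "'e set \<Rightarrow> 'e svec set \<Rightarrow> 'e set \<Rightarrow> 'e set" where
  "om_closure E L A = E \<inter> \<Inter>{zset X | X. X \<in> L \<and> A \<subseteq> zset X}"

definition om_indep :: "'e set \<Rightarrow> 'e svec set \<Rightarrow> 'e set \<Rightarrow> bool" where
  "om_indep E L I \<longleftrightarrow> I \<subseteq> E \<and> (\<forall>e\<in>I. e \<notin> om_closure E L (I - {e}))"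

definition om_basis :: "'e set \<Rightarrow> 'e svec set \<Rightarrow> 'e set \<Rightarrow> bool" where
  "om_basis E L B \<longleftrightarrow> om_indep E L B \<and> (\<forall>e\<in>E - B. \<not> om_indep E L (insert e B))"

definition uniform_om :: "'e set \<Rightarrow> 'e svec set \<Rightarrow> bool" where
  "uniform_om E L \<longleftrightarrow> (\<exists>r. (\<exists>B. om_basis E L B \<and> card B = r) \<and>
       (\<forall>B. B \<subseteq> E \<and> card B = r \<longrightarrow> om_basis E L B))"

definition om_loop :: "'e set \<Rightarrow> 'e svec set \<Rightarrow> 'e \<Rightarrow> bool" where
  "om_loop E L e \<longleftrightarrow> e \<in> om_closure E L {}"

definition affine_om :: "'e set \<Rightarrow> 'e svec set \<Rightarrow> 'e \<Rightarrow> bool" where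
  "affine_om E L g \<longleftrightarrow> oriented_matroid E L \<and> g \<in> E \<and> \<not> om_loop E L g"

definition Lplus :: "'e svec set \<Rightarrow> 'e \<Rightarrow> 'e svec set" where
  "Lplus L g = {X \<in> L. X g = Pos}"

definition Lpp :: "'e svec set \<Rightarrow> 'e \<Rightarrow> 'e svec set" where
  "Lpp L g = {X \<in> Lplus L g. \<forall>Y\<in>L. Y \<noteq> zero_sv \<and> le_sv Y X \<longrightarrow> Y g = Pos}"

text \<open>Restriction to E - {g}: with the convention that sign vectors vanish outside the ground set.\<close>
definition del_sv :: "'e svec \<Rightarrow> 'e \<Rightarrow> 'e svec" where
  "del_sv X g = X(g := Zero)"

definition contraction :: "'e svec set \<Rightarrow> 'e \<Rightarrow> 'e svec set" where
  "contraction L g = {del_sv Y g | Y. Y \<in> L \<and> Y g = Zero}"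

end

theory Submission
  imports Defs
begin

text \<open>
  If X is not in the bounded complex, some nonzero covector Y \<le> X has Y g = 0. In a uniform
  oriented matroid the zero set of a nonzero covector is independent, and every sign pattern
  on an independent set is realised by a covector V; composing, Y \<circ> V = X\g is a covector
  vanishing at g. Conversely X\g itself witnesses that X is unbounded.
\<close>

lemma om_zero: "oriented_matroid E L \<Longrightarrow> zero_sv \<in> L"
  and om_neg: "oriented_matroid E L \<Longrightarrow> X \<in> L \<Longrightarrow> neg_sv X \<in> L"
  and om_comp: "oriented_matroid E L \<Longrightarrow> X \<in> L \<Longrightarrow> Y \<in> L \<Longrightarrow> comp_sv X Y \<in> L"
  and om_support: "oriented_matroid E L \<Longrightarrow> X \<in> L \<Longrightarrow> e \<notin> E \<Longrightarrow> X e = Zero"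
  unfolding oriented_matroid_def by auto

lemma om_elim:
  "oriented_matroid E L \<Longrightarrow> X \<in> L \<Longrightarrow> Y \<in> L \<Longrightarrow> e \<in> sep_set X Y \<Longrightarrow>
    \<exists>Z\<in>L. Z e = Zero \<and> (\<forall>f. f \<notin> sep_set X Y \<longrightarrow> Z f = comp_sv X Y f)"
  unfolding oriented_matroid_def by blast

lemma mem_om_closure_iff:
  "e \<in> om_closure E L A \<longleftrightarrow> e \<in> E \<and> (\<forall>X\<in>L. A \<subseteq> zset X \<longrightarrow> X e = Zero)"
  unfolding om_closure_def zset_def by blast

lemma om_indep_subset: "om_indep E L I \<Longrightarrow> J \<subseteq> I \<Longrightarrow> om_indep E L J"
  unfolding om_indep_def mem_om_closure_iff by (meson Diff_mono order_refl subset_trans subsetD)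

lemma neg_sign_eq_Zero_iff [simp]: "neg_sign s = Zero \<longleftrightarrow> s = Zero"
  by (cases s) auto

lemma om_covector_with_sign:
  assumes om: "oriented_matroid E L" and "U \<in> L" "U a \<noteq> Zero" "s \<noteq> Zero"
  obtains U' where "U' \<in> L" "U' a = s" "zset U' = zset U"
proof (cases "U a = s")
  case True
  with assms show ?thesis using that by blast
next
  case False
  have "neg_sv U a = s"
    using False assms(3,4) unfolding neg_sv_def by (cases "U a"; cases s) auto
  moreover have "zset (neg_sv U) = zset U"
    unfolding zset_def neg_sv_def by simp
  ultimately show ?thesis using that om_neg[OF om \<open>U \<in> L\<close>] by blast
qed

lemma om_elim_keeping_zset:
  assumes om: "oriented_matroid E L" and "U \<in> L" "Y \<in> L" "U e \<noteq> Zero" "Y e \<noteq> Zero"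
  obtains Z where "Z \<in> L" "Z e = Zero" "\<forall>f\<in>zset Y. Z f = U f"
proof -
  have "neg_sign (U e) \<noteq> Zero" using \<open>U e \<noteq> Zero\<close> by simp
  then obtain Y' where Y': "Y' \<in> L" "Y' e = neg_sign (U e)" "zset Y' = zset Y"
    using om_covector_with_sign[OF om \<open>Y \<in> L\<close> \<open>Y e \<noteq> Zero\<close>] by blast
  have "e \<in> sep_set U Y'" using \<open>U e \<noteq> Zero\<close> Y'(2) unfolding sep_set_def by simp
  then obtain Z where Z: "Z \<in> L" "Z e = Zero" "\<forall>f. f \<notin> sep_set U Y' \<longrightarrow> Z f = comp_sv U Y' f"
    using om_elim[OF om \<open>U \<in> L\<close> \<open>Y' \<in> L\<close>] by blast
  have "Z f = U f" if "f \<in> zset Y" for f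
  proof -
    have "Y' f = Zero" using that Y'(3) unfolding zset_def by auto
    then have "f \<notin> sep_set U Y'" unfolding sep_set_def by (cases "U f") auto
    then show ?thesis using Z(3) \<open>Y' f = Zero\<close> unfolding comp_sv_def by auto
  qed
  with Z show ?thesis using that by blast
qed

text \<open>
  If Y e \<noteq> 0, pick c \<in> B in the closure of insert e B - {c} and a covector U vanishing on
  B - {c} but not at c. Eliminating e between U and Y gives a covector that vanishes on
  insert e (B - {c}) but not at c, a contradiction.
\<close>

lemma om_basis_subset_zset_imp_zero:
  assumes om: "oriented_matroid E L" and B: "om_basis E L B"
    and Y: "Y \<in> L" "B \<subseteq> zset Y" and "e \<in> E"
  shows "Y e = Zero"
proof (rule ccontr)
  assume Ye: "Y e \<noteq> Zero"
  then have "e \<notin> B" using Y(2) unfolding zset_def by auto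
  then have "\<not> om_indep E L (insert e B)" using B \<open>e \<in> E\<close> unfolding om_basis_def by auto
  then obtain c where c: "c \<in> insert e B" "c \<in> om_closure E L (insert e B - {c})"
    using B \<open>e \<in> E\<close> unfolding om_basis_def om_indep_def by blast
  have "c \<noteq> e"
  proof
    assume "c = e"
    then have "e \<in> om_closure E L B" using c \<open>e \<notin> B\<close> by simp
    then show False using Y Ye unfolding mem_om_closure_iff by auto
  qed
  then have "c \<in> B" and insert_eq: "insert e B - {c} = insert e (B - {c})" using c(1) by auto
  have c_dep: "\<forall>X\<in>L. insert e (B - {c}) \<subseteq> zset X \<longrightarrow> X c = Zero"
    using c(2) unfolding insert_eq mem_om_closure_iff by blast
  have "c \<notin> om_closure E L (B - {c})"
    using B \<open>c \<in> B\<close> unfolding om_basis_def om_indep_def by auto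
  then obtain U where U: "U \<in> L" "B - {c} \<subseteq> zset U" "U c \<noteq> Zero"
    using B \<open>c \<in> B\<close> unfolding mem_om_closure_iff om_basis_def om_indep_def by auto
  have "U e \<noteq> Zero"
    using c_dep U unfolding zset_def by auto
  then obtain Z where Z: "Z \<in> L" "Z e = Zero" "\<forall>f\<in>zset Y. Z f = U f"
    using om_elim_keeping_zset[OF om U(1) Y(1) _ Ye] by blast
  have "Z f = Zero" if "f \<in> B - {c}" for f
  proof -
    have "Y f = Zero" "U f = Zero" using that U(2) Y(2) unfolding zset_def by auto
    then show ?thesis using Z(3) unfolding zset_def by auto
  qed
  then have "insert e (B - {c}) \<subseteq> zset Z" using Z(2) unfolding zset_def by auto
  moreover have "Z c = U c" using Z(3) Y(2) \<open>c \<in> B\<close> by auto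
  ultimately show False using c_dep Z(1) U(3) by auto
qed

text \<open>
  Signs are fixed one element a \<in> I at a time: composing with a covector that vanishes on
  I - {a} but not at a sets the sign at a without disturbing the others.
\<close>

lemma om_indep_realises_signs:
  assumes om: "oriented_matroid E L" and ind: "om_indep E L I"
  shows "\<exists>V\<in>L. \<forall>f\<in>I. V f = W f"
proof -
  have "finite I" using om ind finite_subset unfolding oriented_matroid_def om_indep_def by blast
  have "\<exists>V\<in>L. (\<forall>f\<in>F. V f = W f) \<and> (\<forall>f\<in>I - F. V f = Zero)" if "finite F" "F \<subseteq> I" for F
    using that
  proof (induction F rule: finite_induct)
    case empty
    then show ?case using om_zero[OF om] unfolding zero_sv_def by auto
  next
    case (insert a F)
    then obtain V where V: "V \<in> L" "\<forall>f\<in>F. V f = W f" "\<forall>f\<in>I - F. V f = Zero" by auto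
    show ?case
    proof (cases "W a = Zero")
      case True
      then show ?thesis using V insert.hyps(2) insert.prems by auto
    next
      case False
      have "a \<notin> om_closure E L (I - {a})" "a \<in> E"
        using ind insert.prems unfolding om_indep_def by auto
      then obtain U where U: "U \<in> L" "I - {a} \<subseteq> zset U" "U a \<noteq> Zero"
        unfolding mem_om_closure_iff by auto
      then obtain U' where U': "U' \<in> L" "U' a = W a" "I - {a} \<subseteq> zset U'"
        using om_covector_with_sign[OF om U(1) U(3) False] by metis
      have "comp_sv V U' \<in> L" using om_comp[OF om V(1) U'(1)] .
      moreover have "\<forall>f\<in>insert a F. comp_sv V U' f = W f"
        "\<forall>f\<in>I - insert a F. comp_sv V U' f = Zero"
        using V U' insert.prems insert.hyps unfolding comp_sv_def zset_def by auto
      ultimately show ?thesis by blast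
    qed
  qed
  from this[OF \<open>finite I\<close>] show ?thesis by auto
qed

lemma covector_above_indep_zset:
  assumes om: "oriented_matroid E L" and Y: "Y \<in> L" "le_sv Y W"
    and ind: "om_indep E L (zset Y \<inter> E)" and W: "\<forall>f. f \<notin> E \<longrightarrow> W f = Zero"
  shows "W \<in> L"
proof -
  obtain V where V: "V \<in> L" "\<forall>f\<in>zset Y \<inter> E. V f = W f"
    using om_indep_realises_signs[OF om ind] by blast
  have "comp_sv Y V = W"
  proof
    fix f
    show "comp_sv Y V f = W f"
      using Y(2) V W om_support[OF om V(1), of f]
      unfolding comp_sv_def le_sv_def zset_def by (cases "f \<in> E") auto
  qed
  then show ?thesis using om_comp[OF om Y(1) V(1)] by simp
qed

text \<open>
  A basis inside z(Y) would force Y = 0, so |z(Y)| < r and z(Y) extends to an r-subset of E,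
  which is a basis by uniformity.
\<close>

lemma uniform_om_indep_zset:
  assumes om: "oriented_matroid E L" and unif: "uniform_om E L"
    and Y: "Y \<in> L" "Y \<noteq> zero_sv"
  shows "om_indep E L (zset Y \<inter> E)"
proof -
  obtain r B0 where B0: "om_basis E L B0" "card B0 = r"
    and bases: "\<forall>B. B \<subseteq> E \<and> card B = r \<longrightarrow> om_basis E L B"
    using unif unfolding uniform_om_def by auto
  obtain e where "Y e \<noteq> Zero" using Y(2) unfolding zero_sv_def by auto
  then have "e \<in> E" using om_support[OF om Y(1)] by auto
  have "finite E" using om unfolding oriented_matroid_def by simp
  have "B0 \<subseteq> E" using B0(1) unfolding om_basis_def om_indep_def by simp
  then have "r \<le> card E" unfolding B0(2)[symmetric] by (rule card_mono[OF \<open>finite E\<close>])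
  have small: "card (zset Y \<inter> E) < r"
  proof (rule ccontr)
    assume "\<not> ?thesis"
    then have "r \<le> card (zset Y \<inter> E)" by simp
    then obtain B where B: "B \<subseteq> zset Y \<inter> E" "card B = r" "finite B"
      by (rule obtain_subset_with_card_n)
    then have "om_basis E L B" using bases by simp
    moreover have "B \<subseteq> zset Y" using B(1) by simp
    ultimately have "Y e = Zero" using om_basis_subset_zset_imp_zero[OF om _ Y(1) _ \<open>e \<in> E\<close>] by blast
    with \<open>Y e \<noteq> Zero\<close> show False by contradiction
  qed
  obtain S where "zset Y \<inter> E \<subseteq> S" "S \<subseteq> E" "card S = r"
    using exists_subset_between[OF less_imp_le[OF small] \<open>r \<le> card E\<close> _ \<open>finite E\<close>] by blast
  then have "om_indep E L S" using bases unfolding om_basis_def by simp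
  then show ?thesis using \<open>zset Y \<inter> E \<subseteq> S\<close> by (rule om_indep_subset)
qed

lemma del_sv_mem_contraction_iff: "del_sv X g \<in> contraction L g \<longleftrightarrow> del_sv X g \<in> L"
proof
  assume "del_sv X g \<in> contraction L g"
  then obtain Y where "Y \<in> L" "Y g = Zero" "del_sv X g = del_sv Y g"
    unfolding contraction_def by auto
  moreover from \<open>Y g = Zero\<close> have "del_sv Y g = Y" unfolding del_sv_def by (rule fun_upd_idem)
  ultimately show "del_sv X g \<in> L" by simp
next
  assume "del_sv X g \<in> L"
  moreover have "del_sv X g g = Zero" "del_sv (del_sv X g) g = del_sv X g"
    unfolding del_sv_def by simp_all
  ultimately show "del_sv X g \<in> contraction L g"
    unfolding contraction_def by (intro CollectI exI[of _ "del_sv X g"]) simp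
qed

lemma not_mem_Lpp_iff:
  assumes "X \<in> Lplus L g"
  shows "X \<notin> Lpp L g \<longleftrightarrow> (\<exists>Y\<in>L. Y \<noteq> zero_sv \<and> le_sv Y X \<and> Y g = Zero)"
proof -
  have "X \<notin> Lpp L g \<longleftrightarrow> (\<exists>Y\<in>L. Y \<noteq> zero_sv \<and> le_sv Y X \<and> Y g \<noteq> Pos)"
    using assms unfolding Lpp_def by blast
  moreover have "Y g = Zero \<longleftrightarrow> Y g \<noteq> Pos" if "le_sv Y X" for Y
    using that assms unfolding le_sv_def Lplus_def by force
  ultimately show ?thesis by blast
qed

theorem corollary4p3:
  fixes E :: "'e set" and L :: "'e svec set" and g :: 'e
  assumes "affine_om E L g"
    and "uniform_om E L"
    and "card E > 1"
    and "\<forall>X\<in>Lpp L g. (\<forall>Y\<in>Lpp L g. le_sv X Y \<longrightarrow> Y = X) \<longrightarrow> tope L X"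
    and "\<forall>X\<in>Lplus L g. del_sv X g \<noteq> zero_sv"
    and "X \<in> Lplus L g"
  shows "del_sv X g \<in> contraction L g \<longleftrightarrow> X \<notin> Lpp L g"
proof -
  have om: "oriented_matroid E L" and "X \<in> L"
    using assms(1,6) unfolding affine_om_def Lplus_def by auto
  have X_del: "le_sv (del_sv X g) X" "del_sv X g g = Zero" "del_sv X g \<noteq> zero_sv"
    using assms(5,6) unfolding le_sv_def del_sv_def by simp_all
  show ?thesis
  proof
    assume "del_sv X g \<in> contraction L g"
    then have "del_sv X g \<in> L" by (simp add: del_sv_mem_contraction_iff)
    then show "X \<notin> Lpp L g" using X_del not_mem_Lpp_iff[OF assms(6)] by blast
  next
    assume "X \<notin> Lpp L g"
    then obtain Y where Y: "Y \<in> L" "Y \<noteq> zero_sv" "le_sv Y X" "Y g = Zero"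
      using not_mem_Lpp_iff[OF assms(6)] by blast
    have "le_sv Y (del_sv X g)" using Y(3,4) unfolding le_sv_def del_sv_def by auto
    moreover have "\<forall>f. f \<notin> E \<longrightarrow> del_sv X g f = Zero"
      using om_support[OF om \<open>X \<in> L\<close>] unfolding del_sv_def by auto
    ultimately have "del_sv X g \<in> L"
      using covector_above_indep_zset[OF om Y(1) _ uniform_om_indep_zset[OF om assms(2) Y(1,2)]]
      by simp
    then show "del_sv X g \<in> contraction L g" by (simp add: del_sv_mem_contraction_iff)
  qed
qed

end
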